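(* With $B_n$ as in the context and $L_n=|B_n|$, one has $\lim_{n\to\infty} L_{n+1}/L_n=\alpha$, where $\alpha\approx 2.20557$ is the unique real root of $x^3-2x^2-1=0$.
   Context: Generation operator: for a finite vector $R=\langle r_1,\dots,r_m\rangle$ of positive integers and $s\in\{1,3\}$, $\mathcal{G}(R,s)= s^{r_1}\,(4-s)^{r_2}\,s^{r_3}\cdots$ (the $i$-th run consists of $r_i$ copies of $s$ if $i$ is odd and of $4-s$ if $i$ is even), of length $\sum_i r_i$. For a finite word $W$ over $\{1,3\}$, $R(W)$ denotes $W$ itself regarded as a vector of positive integers. Define $B_1=\mathcal{G}(\langle 1,3,3,3,1\rangle,1)=1\,3\,3\,3\,1\,1\,1\,3\,3\,3\,1$, $P_1=3$, and for $n\ge1$: $B_{n+1}=B_n\,P_n\,B_n$ (concatenation), $P_{n+1}=\mathcal{G}(R(P_n),3)$. *)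

theory Defs
  imports Complex_Main
begin

fun gen :: "nat list \<Rightarrow> nat \<Rightarrow> nat list" where
  "gen [] s = []"
| "gen (r # rs) s = replicate r s @ gen rs (4 - s)"

text \<open>BPk k = (B_{k+1}, P_{k+1}).\<close>
primrec BPk :: "nat \<Rightarrow> nat list \<times> nat list" where
  "BPk 0 = (gen [1,3,3,3,1] 1, [3])"
| "BPk (Suc k) = (let (b, p) = BPk k in (b @ p @ b, gen p 3))"

text \<open>B n and P n for n \<ge> 1 (the value at n = 0 is irrelevant).\<close>
definition B :: "nat \<Rightarrow> nat list" where
  "B n = fst (BPk (n - 1))"

definition P :: "nat \<Rightarrow> nat list" where
  "P n = snd (BPk (n - 1))"

definition L :: "nat \<Rightarrow> nat" where
  "L n = length (B n)"

end

theory Submission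
  imports Defs
begin

text \<open>
  Since \<open>P\<^sub>n\<close> has odd length and letters in \<open>{1,3}\<close>, applying \<open>\<G>(\<cdot>,3)\<close> to
  \<open>P\<^sub>n\<^sub>+\<^sub>2 1 P\<^sub>n 1 P\<^sub>n\<^sub>+\<^sub>2\<close> treats the three blocks independently, so by induction
  \<open>P\<^sub>n\<^sub>+\<^sub>3 = P\<^sub>n\<^sub>+\<^sub>2 1 P\<^sub>n 1 P\<^sub>n\<^sub>+\<^sub>2\<close>. Combined with \<open>L\<^sub>n\<^sub>+\<^sub>1 = 2 L\<^sub>n + |P\<^sub>n|\<close> this yields
  \<open>|P\<^sub>n\<^sub>+\<^sub>2| = L\<^sub>n - 2\<close> and \<open>L\<^sub>n\<^sub>+\<^sub>3 = 2 L\<^sub>n\<^sub>+\<^sub>2 + L\<^sub>n - 2\<close>, so \<open>L\<^sub>n - 1\<close> satisfies the linear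
  recurrence with characteristic polynomial \<open>x\<^sup>3 - 2x\<^sup>2 - 1\<close>. Its two non-real roots
  have modulus \<open>\<alpha>\<^sup>-\<^sup>1\<^sup>/\<^sup>2 < 1\<close>: concretely, the deviation \<open>e\<^sub>n = x\<^sub>n\<^sub>+\<^sub>1 - \<alpha> x\<^sub>n\<close> obeys a
  second-order recurrence along which a positive definite quadratic form shrinks by
  the factor \<open>1/\<alpha>\<close>. Hence \<open>e\<^sub>n\<close> stays bounded while \<open>L\<^sub>n \<rightarrow> \<infinity>\<close>, and \<open>L\<^sub>n\<^sub>+\<^sub>1/L\<^sub>n \<rightarrow> \<alpha>\<close>.
\<close>

lemma gen_append:
  "s \<le> 4 \<Longrightarrow> gen (xs @ ys) s = gen xs s @ gen ys (if even (length xs) then s else 4 - s)"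
  by (induction xs arbitrary: s) auto

lemma length_gen: "length (gen rs s) = sum_list rs"
  by (induction rs arbitrary: s) auto

lemma set_gen_subset: "s \<le> 4 \<Longrightarrow> set (gen rs s) \<subseteq> {s, 4 - s}"
proof (induction rs arbitrary: s)
  case (Cons r rs)
  then have "set (gen rs (4 - s)) \<subseteq> {4 - s, s}"
    using Cons.IH[of "4 - s"] by simp
  then show ?case by auto
qed simp

lemma even_sum_list_odd_iff:
  fixes xs :: "nat list"
  assumes "\<forall>x \<in> set xs. odd x"
  shows "even (sum_list xs) \<longleftrightarrow> even (length xs)"
  using assms by (induction xs) auto

lemma P_Suc: "1 \<le> n \<Longrightarrow> P (Suc n) = gen (P n) 3"
  by (cases n) (simp_all add: P_def split: prod.split)

lemma B_Suc: "1 \<le> n \<Longrightarrow> B (Suc n) = B n @ P n @ B n"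
  by (cases n) (simp_all add: B_def P_def split: prod.split)

lemma set_P_subset: "1 \<le> n \<Longrightarrow> set (P n) \<subseteq> {1, 3}"
proof (induction n rule: nat_induct_at_least)
  case (Suc n)
  then show ?case
    using set_gen_subset[of 3 "P n"] by (auto simp: P_Suc)
qed (simp add: P_def)

lemma odd_length_P: "1 \<le> n \<Longrightarrow> odd (length (P n))"
proof (induction n rule: nat_induct_at_least)
  case (Suc n)
  have "\<forall>x \<in> set (P n). odd x"
    using set_P_subset[OF Suc.hyps] by auto
  with Suc show ?case
    by (simp add: P_Suc length_gen even_sum_list_odd_iff)
qed (simp add: P_def)

lemma P_self_similar: "1 \<le> n \<Longrightarrow> P (n + 3) = P (n + 2) @ [1] @ P n @ [1] @ P (n + 2)"
proof (induction n rule: nat_induct_at_least)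
  case base
  show ?case
    by (simp add: P_def numeral_eq_Suc)
next
  case (Suc n)
  have odd: "odd (length (P (n + 2)))" "odd (length (P n))"
    using odd_length_P Suc.hyps by simp_all
  have "P (Suc n + 3) = gen (P (n + 3)) 3"
    using P_Suc[of "n + 3"] by simp
  also have "\<dots> = gen (P (n + 2)) 3 @ [1] @ gen (P n) 3 @ [1] @ gen (P (n + 2)) 3"
    using odd by (simp add: Suc.IH gen_append)
  also have "\<dots> = P (Suc n + 2) @ [1] @ P (Suc n) @ [1] @ P (Suc n + 2)"
    using Suc.hyps by (simp add: P_Suc)
  finally show ?case .
qed

lemma length_P_recurrence:
  "1 \<le> n \<Longrightarrow> length (P (n + 3)) = 2 * length (P (n + 2)) + length (P n) + 2"
  by (simp add: P_self_similar)

lemma L_Suc: "1 \<le> n \<Longrightarrow> L (Suc n) = 2 * L n + length (P n)"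
  by (simp add: L_def B_Suc)

lemma length_P_add_2: "1 \<le> n \<Longrightarrow> length (P (n + 2)) + 2 = L n"
proof (induction n rule: nat_induct_at_least)
  case base
  show ?case
    by (simp add: P_def L_def B_def numeral_eq_Suc)
next
  case (Suc n)
  then show ?case
    using length_P_recurrence[OF Suc.hyps] L_Suc[OF Suc.hyps] by (simp add: numeral_eq_Suc)
qed

lemma L_recurrence: "1 \<le> n \<Longrightarrow> L (n + 3) + 2 = 2 * L (n + 2) + L n"
  using L_Suc[of "n + 2"] length_P_add_2[of n] by (simp add: numeral_eq_Suc)

lemma real_L_recurrence:
  "1 \<le> n \<Longrightarrow> real (L (n + 3)) - 1 = 2 * (real (L (n + 2)) - 1) + (real (L n) - 1)"
  using arg_cong[where f = real, OF L_recurrence[of n]] by simp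

lemma L_ge: "1 \<le> n \<Longrightarrow> n \<le> L n"
proof (induction n rule: nat_induct_at_least)
  case base
  show ?case
    by (simp add: L_def B_def)
next
  case (Suc n)
  then show ?case
    using L_Suc[OF Suc.hyps] by simp
qed

lemma L_tendsto_at_top: "filterlim (\<lambda>n. real (L n)) at_top sequentially"
proof (rule filterlim_at_top_mono[OF filterlim_real_sequentially])
  show "\<forall>\<^sub>F n in sequentially. real n \<le> real (L n)"
    using eventually_ge_at_top[of 1] by eventually_elim (simp add: L_ge)
qed

lemma cubic_root_gt_2:
  fixes \<alpha> :: real
  assumes "\<alpha> ^ 3 - 2 * \<alpha> ^ 2 - 1 = 0"
  shows "2 < \<alpha>"
proof (rule ccontr)
  assume "\<not> 2 < \<alpha>"
  then have "\<alpha> ^ 2 * (\<alpha> - 2) \<le> 0"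
    by (simp add: mult_nonneg_nonpos)
  moreover have "\<alpha> ^ 2 * (\<alpha> - 2) = 1"
    using assms by (simp add: algebra_simps power2_eq_square power3_eq_cube)
  ultimately show False
    by simp
qed

lemma cubic_root_unique:
  fixes \<alpha> :: real
  assumes "\<alpha> ^ 3 - 2 * \<alpha> ^ 2 - 1 = 0"
  shows "\<exists>!x::real. x ^ 3 - 2 * x ^ 2 - 1 = 0"
proof (rule ex1I[of _ \<alpha>])
  fix y :: real
  assume y: "y ^ 3 - 2 * y ^ 2 - 1 = 0"
  have strict_mono: "x ^ 2 * (x - 2) < z ^ 2 * (z - 2)" if "2 < x" "x < z" for x z :: real
    using that by (intro mult_strict_mono power_strict_mono) auto
  have "y ^ 2 * (y - 2) = \<alpha> ^ 2 * (\<alpha> - 2)"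
    using y assms by (simp add: algebra_simps power2_eq_square power3_eq_cube)
  then show "y = \<alpha>"
    using strict_mono[of y \<alpha>] strict_mono[of \<alpha> y] cubic_root_gt_2[OF y] cubic_root_gt_2[OF assms]
    by (metis linorder_neqE_linordered_idom order_less_irrefl)
qed (fact assms)

lemma Bseq_second_order_recurrence:
  fixes \<alpha> :: real and e :: "nat \<Rightarrow> real"
  assumes root: "\<alpha> ^ 3 - 2 * \<alpha> ^ 2 - 1 = 0"
    and rec: "\<And>k. \<alpha> * e (k + 2) + \<alpha> * (\<alpha> - 2) * e (k + 1) + e k = 0"
  shows "Bseq e"
proof -
  define u where "u = \<alpha> - 2"
  define Q where "Q k = \<alpha> * e (k + 1) ^ 2 + \<alpha> * u * e (k + 1) * e k + e k ^ 2" for k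
  \<comment> \<open>a Lyapunov function: it dominates \<open>e\<^sub>k\<^sup>2/2\<close> and is divided by \<open>\<alpha>\<close> at each step\<close>
  have "2 < \<alpha>"
    using cubic_root_gt_2[OF root] .
  have "\<alpha> * (\<alpha> * u ^ 2) = u * (\<alpha> ^ 2 * u)"
    by (simp add: power2_eq_square)
  also have "\<alpha> ^ 2 * u = 1"
    using root by (simp add: u_def algebra_simps power2_eq_square power3_eq_cube)
  finally have "\<alpha> * (\<alpha> * u ^ 2) < \<alpha> * 1"
    by (simp add: u_def)
  then have "\<alpha> * u ^ 2 < 1"
    by (rule mult_left_less_imp_less) (use \<open>2 < \<alpha>\<close> in simp)
  then have Q_ge: "e k ^ 2 / 2 \<le> Q k" for k
  proof -
    have "Q k - e k ^ 2 / 2 = \<alpha> * (e (k + 1) + u * e k / 2) ^ 2 + (2 - \<alpha> * u ^ 2) / 4 * e k ^ 2"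
      by (simp add: Q_def field_simps power2_eq_square)
    moreover have "0 \<le> \<alpha> * (e (k + 1) + u * e k / 2) ^ 2 + (2 - \<alpha> * u ^ 2) / 4 * e k ^ 2"
      using \<open>2 < \<alpha>\<close> \<open>\<alpha> * u ^ 2 < 1\<close> by simp
    ultimately show ?thesis
      by linarith
  qed
  have Q_Suc: "\<alpha> * Q (Suc k) = Q k" for k
  proof -
    have step: "\<alpha> * e (k + 2) = - \<alpha> * u * e (k + 1) - e k"
      using rec[of k] by (simp add: u_def algebra_simps)
    have "\<alpha> * Q (Suc k) = \<alpha> * e (k + 2) * (\<alpha> * e (k + 2) + \<alpha> * u * e (k + 1)) + \<alpha> * e (k + 1) ^ 2"
      by (simp add: Q_def algebra_simps power2_eq_square numeral_eq_Suc)
    also have "\<dots> = Q k"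
      unfolding step by (simp add: Q_def algebra_simps power2_eq_square)
    finally show ?thesis .
  qed
  have Q_le: "Q k \<le> Q 0" for k
  proof (induction k)
    case (Suc k)
    have "0 \<le> Q (Suc k)"
      using Q_ge[of "Suc k"] zero_le_power2[of "e (Suc k)"] by linarith
    then have "1 * Q (Suc k) \<le> \<alpha> * Q (Suc k)"
      using \<open>2 < \<alpha>\<close> by (intro mult_right_mono) simp_all
    then show ?case
      using Suc Q_Suc[of k] by simp
  qed simp
  have "\<bar>e k\<bar> \<le> sqrt (2 * Q 0)" for k
  proof (rule real_le_rsqrt)
    show "\<bar>e k\<bar> ^ 2 \<le> 2 * Q 0"
      using Q_ge[of k] Q_le[of k] by simp
  qed
  then show ?thesis
    by (intro BseqI') simp
qed

lemma Bseq_deviation_cubic_recurrence: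
  fixes \<alpha> :: real and x :: "nat \<Rightarrow> real"
  assumes root: "\<alpha> ^ 3 - 2 * \<alpha> ^ 2 - 1 = 0"
    and rec: "\<And>k. x (k + 3) = 2 * x (k + 2) + x k"
  shows "Bseq (\<lambda>k. x (Suc k) - \<alpha> * x k)"
proof (rule Bseq_second_order_recurrence[OF root])
  fix k
  have "\<alpha> * (x (k + 3) - \<alpha> * x (k + 2)) + \<alpha> * (\<alpha> - 2) * (x (k + 2) - \<alpha> * x (k + 1))
      + (x (k + 1) - \<alpha> * x k) = - (\<alpha> ^ 3 - 2 * \<alpha> ^ 2 - 1) * x (k + 1)"
    unfolding rec by (simp add: algebra_simps power2_eq_square power3_eq_cube)
  then show "\<alpha> * (x (Suc (k + 2)) - \<alpha> * x (k + 2)) + \<alpha> * (\<alpha> - 2) * (x (Suc (k + 1)) - \<alpha> * x (k + 1))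
      + (x (Suc k) - \<alpha> * x k) = 0"
    using root by (simp add: numeral_eq_Suc)
qed

lemma ratio_tendsto_of_Bseq_deviation:
  fixes y :: "nat \<Rightarrow> real"
  assumes deviation: "Bseq (\<lambda>n. y (Suc n) - \<alpha> * y n)"
    and unbounded: "filterlim y at_top sequentially"
  shows "(\<lambda>n. y (Suc n) / y n) \<longlonglongrightarrow> \<alpha>"
proof -
  have "Zfun (\<lambda>n. inverse (y n)) sequentially"
    using tendsto_inverse_0_at_top[OF unbounded] by (simp add: tendsto_Zfun_iff)
  then have "Zfun (\<lambda>n. (y (Suc n) - \<alpha> * y n) * inverse (y n)) sequentially"
    by (rule bounded_bilinear.Bfun_prod_Zfun[OF bounded_bilinear_mult deviation])
  then have "(\<lambda>n. (y (Suc n) - \<alpha> * y n) * inverse (y n)) \<longlonglongrightarrow> 0"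
    by (simp add: tendsto_Zfun_iff)
  then have lim: "(\<lambda>n. \<alpha> + (y (Suc n) - \<alpha> * y n) * inverse (y n)) \<longlonglongrightarrow> \<alpha>"
    using tendsto_add[OF tendsto_const] by fastforce
  have "\<forall>\<^sub>F n in sequentially. 0 < y n"
    using unbounded by (simp add: filterlim_at_top_dense)
  then have "\<forall>\<^sub>F n in sequentially. \<alpha> + (y (Suc n) - \<alpha> * y n) * inverse (y n) = y (Suc n) / y n"
    by eventually_elim (simp add: field_simps)
  with lim show ?thesis
    by (rule Lim_transform_eventually)
qed

theorem mainTheorem6:
  fixes \<alpha> :: real
  assumes "\<alpha> ^ 3 - 2 * \<alpha> ^ 2 - 1 = 0"
  shows "(\<exists>!x::real. x ^ 3 - 2 * x ^ 2 - 1 = 0)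
         \<and> (\<lambda>n. real (L (Suc n)) / real (L n)) \<longlonglongrightarrow> \<alpha>"
proof
  show "\<exists>!x::real. x ^ 3 - 2 * x ^ 2 - 1 = 0"
    using cubic_root_unique[OF assms] .
  define y where "y k = real (L (Suc k))" for k
  have "Bseq (\<lambda>k. (y (Suc k) - 1) - \<alpha> * (y k - 1) + (1 - \<alpha>))"
  proof (subst Bseq_add_iff, rule Bseq_deviation_cubic_recurrence[OF assms])
    show "y (k + 3) - 1 = 2 * (y (k + 2) - 1) + (y k - 1)" for k
      using real_L_recurrence[of "Suc k"] by (simp add: y_def)
  qed
  then have "Bseq (\<lambda>k. y (Suc k) - \<alpha> * y k)"
    by (simp add: algebra_simps)
  moreover have "filterlim y at_top sequentially"
    using L_tendsto_at_top unfolding y_def by (rule filterlim_sequentially_Suc[THEN iffD2])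
  ultimately have "(\<lambda>k. y (Suc k) / y k) \<longlonglongrightarrow> \<alpha>"
    by (rule ratio_tendsto_of_Bseq_deviation)
  then show "(\<lambda>n. real (L (Suc n)) / real (L n)) \<longlonglongrightarrow> \<alpha>"
    unfolding y_def by (rule LIMSEQ_imp_Suc)
qed

end
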